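(* Let $n\ge1$, let $q$ be an integer with $0<q\le n$, and let $f\colon\mathbb Z_2^n\to\mathbb Z_2^n$ be a map such that every $\vec y\in\mathbb Z_2^n$ has at most $2^q$ preimages under $f$. Then there is an even permutation $h$ of $\mathbb Z_2^{n+q}$ with at most $2^{n+1}$ non-fixed points such that $\psi_{n+q,n}(h(\phi_{n,n+q}(\vec x)))=f(\vec x)$ for all $\vec x\in\mathbb Z_2^n$; consequently $f$ can be implemented by a reversible circuit of NOT, CNOT and 2-CNOT gates on $n+q$ lines with $q$ additional inputs, i.e. $f\in F(n,q)$.
   Context: For $m\ge1$, a $k$-CNOT gate on $m$ lines with control lines $i_1,\dots,i_k$ and target line $j\notin\{i_1,\dots,i_k\}$ is the map $\mathbb Z_2^m\to\mathbb Z_2^m$ replacing $x_j$ by $x_j\oplus(x_{i_1}\wedge\dots\wedge x_{i_k})$ and leaving other coordinates unchanged; NOT, CNOT, 2-CNOT are the cases $k=0,1,2$. A reversible circuit on $m$ lines is a finite sequence of such gates and computes their composition $g$. With $\phi_{n,n+q}(\langle x_1,\dots,x_n\rangle)=\langle x_1,\dots,x_n,0,\dots,0\rangle$ and $\psi_{n+q,n}(\langle x_1,\dots,x_{n+q}\rangle)=\langle x_1,\dots,x_n\rangle$, such a circuit on $n+q$ lines implements $f\colon\mathbb Z_2^n\to\mathbb Z_2^n$ with $q$ additional inputs if $\psi_{n+q,n}(g(\phi_{n,n+q}(\vec x)))=f(\vec x)$ for all $\vec x$. $F(n,q)$ denotes the set of all maps $\mathbb Z_2^n\to\mathbb Z_2^n$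 implementable in this way. A non-fixed point of a permutation $h$ is a point $\vec x$ with $h(\vec x)\ne\vec x$. *)

theory Defs
  imports "HOL-Combinatorics.Permutations"
begin

text \<open>Vectors of Z_2^m are boolean lists of length m (True = 1); lines are indexed 0..m-1.\<close>

definition Zvec :: "nat \<Rightarrow> bool list set" where
  "Zvec m = {xs. length xs = m}"

definition phi :: "nat \<Rightarrow> nat \<Rightarrow> bool list \<Rightarrow> bool list" where
  "phi n m xs = xs @ replicate (m - n) False"

definition psi :: "nat \<Rightarrow> nat \<Rightarrow> bool list \<Rightarrow> bool list" where
  "psi m n xs = take n xs"

text \<open>A gate is a pair (controls, target).\<close>
type_synonym gate = "nat set \<times> nat"

definition gate_ok :: "nat \<Rightarrow> gate \<Rightarrow> bool" where
  "gate_ok m g = (finite (fst g) \<and> fst g \<subseteq> {..<m} \<and> snd g < m \<and> snd g \<notin> fst g)"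

text \<open>NOT, CNOT and 2-CNOT gates: at most 2 control lines.\<close>
definition gate_ok_012 :: "nat \<Rightarrow> gate \<Rightarrow> bool" where
  "gate_ok_012 m g = (gate_ok m g \<and> card (fst g) \<le> 2)"

definition apply_gate :: "gate \<Rightarrow> bool list \<Rightarrow> bool list" where
  "apply_gate g xs = xs[snd g := (xs ! snd g \<noteq> (\<forall>i\<in>fst g. xs ! i))]"

definition run_circuit :: "gate list \<Rightarrow> bool list \<Rightarrow> bool list" where
  "run_circuit c xs = fold apply_gate c xs"

definition Fset :: "nat \<Rightarrow> nat \<Rightarrow> (bool list \<Rightarrow> bool list) set" where
  "Fset n q = {f. \<exists>c. (\<forall>g\<in>set c. gate_ok_012 (n + q) g) \<and>
      (\<forall>x\<in>Zvec n. psi (n + q) n (run_circuit c (phi n (n + q) x)) = f x)}"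

end

(*
  Label the points of each fibre of f injectively by q-bit strings, the label of one
  chosen point x0 being 0. Then x \<mapsto> f x @ label x is injective, and x @ 0 \<mapsto> f x @ label x extends
  to a permutation of Z_2^(n+q) moving only points of two sets of size 2^n that share f x0 @ 0.
  If it is odd, composing with the transposition of f x0 @ 0 and f x0 @ 10...0 makes it even without
  changing the first n coordinates of any value.

  NOT, CNOT and 2-CNOT gates generate every even permutation of Z_2^m. Gates with many controls are
  built from them with idle lines as borrowed ancillas; the gate with all controls but two is the
  product of the two parallel hypercube-edge transpositions at the all-ones vector and its
  neighbour. Conjugating by NOT and Fredkin gates moves such products around, which makes the
  product of any two edge transpositions realizable, and every transposition is conjugate to an
  edge transposition by edge transpositions.
*)
theory Submission
  imports Defs
begin

lemma transpose_apply_inj_on: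
  "inj_on g S \<Longrightarrow> a \<in> S \<Longrightarrow> b \<in> S \<Longrightarrow> y \<in> S \<Longrightarrow>
   g (transpose a b y) = transpose (g a) (g b) (g y)"
  by (simp add: transpose_def inj_on_eq_iff)

lemma support_transpose_comp: "{x. (transpose u v \<circ> h) x \<noteq> x} \<subseteq> {x. h x \<noteq> x} \<union> {u, v}"
  by (auto simp: transpose_def)

lemma evenperm_transpose_comp:
  "permutation p \<Longrightarrow> a \<noteq> b \<Longrightarrow> evenperm (transpose a b \<circ> p) \<longleftrightarrow> \<not> evenperm p"
  by (simp add: evenperm_comp permutation_swap_id evenperm_swap)

lemma card_le_inj_with_value:
  assumes "finite A" "finite B" "card A \<le> card B" "b \<in> B"
  shows "\<exists>\<iota>. \<iota> ` A \<subseteq> B \<and> inj_on \<iota> A \<and> (a \<in> A \<longrightarrow> \<iota> a = b)"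
proof -
  obtain \<iota> where \<iota>: "\<iota> ` A \<subseteq> B" "inj_on \<iota> A"
    using card_le_inj[OF assms(1-3)] by blast
  show ?thesis
  proof (cases "a \<in> A")
    case True
    then have "\<iota> a \<in> B" using \<iota>(1) by blast
    then have "(transpose (\<iota> a) b \<circ> \<iota>) ` A \<subseteq> B"
      using \<iota>(1) assms(4) by (auto simp: transpose_def)
    moreover have "inj_on (transpose (\<iota> a) b \<circ> \<iota>) A"
      using \<iota>(2) by (simp add: comp_inj_on inj_on_subset[OF inj_transpose])
    ultimately show ?thesis using True by (intro exI[of _ "transpose (\<iota> a) b \<circ> \<iota>"]) simp
  qed (use \<iota> in blast)
qed

lemma permutes_extension:
  assumes "finite A" "inj_on \<sigma> A" "A \<subseteq> S" "\<sigma> ` A \<subseteq> S"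
  shows "\<exists>h. h permutes S \<and> {x. h x \<noteq> x} \<subseteq> A \<union> \<sigma> ` A \<and> (\<forall>a\<in>A. h a = \<sigma> a)"
proof -
  let ?B = "\<sigma> ` A"
  have "card (?B - A) = card (A - ?B)"
    using assms by (simp add: card_Diff_subset_Int card_image Int_commute)
  then obtain \<rho> where \<rho>: "bij_betw \<rho> (?B - A) (A - ?B)"
    using finite_same_card_bij[of "?B - A" "A - ?B"] assms by auto
  define h where "h x = (if x \<in> A then \<sigma> x else if x \<in> ?B then \<rho> x else x)" for x
  have hA: "h ` A = ?B" by (rule image_cong) (simp_all add: h_def)
  have "h ` (?B - A) = \<rho> ` (?B - A)" by (rule image_cong) (simp_all add: h_def)
  then have hB: "h ` (?B - A) = A - ?B" using \<rho> by (simp add: bij_betw_def)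
  have "h ` (A \<union> ?B) = h ` (A \<union> (?B - A))" by (simp add: Un_Diff_cancel)
  also have "\<dots> = A \<union> ?B" using hA hB by (auto simp only: image_Un)
  finally have im: "h ` (A \<union> ?B) = A \<union> ?B" .
  have "inj_on h (A \<union> ?B)"
    by (rule eq_card_imp_inj_on) (use assms im in auto)
  with im have h: "h permutes (A \<union> ?B)"
    by (intro bij_imp_permutes) (auto simp: bij_betw_def h_def)
  moreover have "A \<union> ?B \<subseteq> S" using assms(3,4) by blast
  ultimately have "h permutes S" by (rule permutes_subset)
  moreover have "{x. h x \<noteq> x} \<subseteq> A \<union> ?B" using permutes_not_in[OF h] by blast
  moreover have "\<forall>a\<in>A. h a = \<sigma> a" by (simp add: h_def)
  ultimately show ?thesis by blast
qed

lemma card_Un_image_less: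
  assumes "finite A" "inj_on \<sigma> A" "A \<inter> \<sigma> ` A \<noteq> {}"
  shows "card (A \<union> \<sigma> ` A) < 2 * card A"
proof -
  have "0 < card (A \<inter> \<sigma> ` A)" using assms(1,3) by (simp add: card_gt_0_iff)
  then show ?thesis
    using card_Un_Int[OF assms(1) finite_imageI[OF assms(1), of \<sigma>]] card_image[OF assms(2)] by simp
qed

lemma finite_Zvec: "finite (Zvec m)"
  using finite_lists_length_eq[of "UNIV :: bool set" m] by (simp add: Zvec_def)

lemma card_Zvec: "card (Zvec m) = 2 ^ m"
  using card_lists_length_eq[of "UNIV :: bool set" m] by (simp add: Zvec_def)

lemma ones_in_Zvec: "replicate m True \<in> Zvec m"
  by (simp add: Zvec_def)

lemma transpose_in_Zvec:
  "a \<in> Zvec m \<Longrightarrow> b \<in> Zvec m \<Longrightarrow> x \<in> Zvec m \<Longrightarrow> transpose a b x \<in> Zvec m"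
  by (simp add: transpose_def)

definition flip_bit :: "nat \<Rightarrow> bool list \<Rightarrow> bool list" where
  "flip_bit k a = a[k := \<not> a ! k]"

lemma length_flip_bit [simp]: "length (flip_bit k a) = length a"
  by (simp add: flip_bit_def)

lemma flip_bit_in_Zvec [simp]: "flip_bit k a \<in> Zvec m \<longleftrightarrow> a \<in> Zvec m"
  by (simp add: Zvec_def)

lemma nth_flip_bit: "k < length a \<Longrightarrow> flip_bit k a ! i = (if i = k then \<not> a ! k else a ! i)"
  by (simp add: flip_bit_def nth_list_update)

lemma nth_flip_bit_other [simp]: "i \<noteq> k \<Longrightarrow> flip_bit k a ! i = a ! i"
  by (simp add: flip_bit_def)

lemma all_nth_flip_bit_other:
  "k \<notin> S \<Longrightarrow> (\<forall>i\<in>S. flip_bit k y ! i) \<longleftrightarrow> (\<forall>i\<in>S. y ! i)"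
  by (metis nth_flip_bit_other)

lemma ex_nth_flip_bit_other:
  "k \<notin> S \<Longrightarrow> (\<exists>i\<in>S. \<not> flip_bit k y ! i) \<longleftrightarrow> (\<exists>i\<in>S. \<not> y ! i)"
  by (metis nth_flip_bit_other)

lemma flip_bit_flip_bit [simp]: "flip_bit k (flip_bit k a) = a"
  by (cases "k < length a") (simp_all add: flip_bit_def list_update_beyond)

lemma inj_flip_bit: "inj (flip_bit k)"
  by (metis flip_bit_flip_bit injI)

lemma flip_bit_commute: "flip_bit i (flip_bit j a) = flip_bit j (flip_bit i a)"
  by (cases "i = j") (auto simp: flip_bit_def list_update_swap nth_list_update)

lemma flip_bit_neq: "k < length a \<Longrightarrow> flip_bit k a \<noteq> a"
  by (metis flip_bit_def nth_list_update_eq)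

lemma Zvec_flip_bit_induct [consumes 2, case_names base flip]:
  assumes "a \<in> Zvec m" "b \<in> Zvec m" "P b"
    and step: "\<And>a k. a \<in> Zvec m \<Longrightarrow> k < m \<Longrightarrow> P a \<Longrightarrow> P (flip_bit k a)"
  shows "P a"
proof -
  have "P a" if "card {k. k < m \<and> a ! k \<noteq> b ! k} = d" "a \<in> Zvec m" for a d
    using that
  proof (induction d arbitrary: a)
    case 0
    then have "{k. k < m \<and> a ! k \<noteq> b ! k} = {}" by simp
    then have "a = b" using 0 assms(2) by (intro nth_equalityI) (auto simp: Zvec_def)
    then show ?case using assms(3) by simp
  next
    case (Suc d)
    then obtain k where k: "k < m" "a ! k \<noteq> b ! k"
      by (metis (mono_tags, lifting) card.empty empty_Collect_eq nat.simps(3))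
    have "{i. i < m \<and> flip_bit k a ! i \<noteq> b ! i} = {i. i < m \<and> a ! i \<noteq> b ! i} - {k}"
      using k Suc.prems by (auto simp: nth_flip_bit Zvec_def)
    then have "P (flip_bit k a)"
      using Suc k by (intro Suc.IH) (simp_all add: card_Diff_singleton)
    then show ?case using step[of "flip_bit k a" k] Suc.prems k by simp
  qed
  then show ?thesis using assms(1) by blast
qed

lemma length_apply_gate [simp]: "length (apply_gate g xs) = length xs"
  by (simp add: apply_gate_def)

lemma apply_gate_in_Zvec [simp]: "apply_gate g x \<in> Zvec m \<longleftrightarrow> x \<in> Zvec m"
  by (simp add: Zvec_def)

lemma nth_apply_gate:
  "t < length xs \<Longrightarrow>
   apply_gate (S, t) xs ! k = (if k = t then xs ! t \<noteq> (\<forall>i\<in>S. xs ! i) else xs ! k)"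
  by (simp add: apply_gate_def nth_list_update)

lemma apply_gate_eq_flip_bit:
  "apply_gate (S, t) x = (if \<forall>i\<in>S. x ! i then flip_bit t x else x)"
  by (simp add: apply_gate_def flip_bit_def)

lemma apply_gate_apply_gate:
  assumes "t \<notin> S" shows "apply_gate (S, t) (apply_gate (S, t) x) = x"
  using assms
  by (cases "\<forall>i\<in>S. x ! i")
     (auto simp: apply_gate_eq_flip_bit all_nth_flip_bit_other ex_nth_flip_bit_other)

lemma length_run_circuit [simp]: "length (run_circuit c xs) = length xs"
  unfolding run_circuit_def by (induction c arbitrary: xs) auto

lemma run_circuit_append: "run_circuit (c1 @ c2) x = run_circuit c2 (run_circuit c1 x)"
  by (simp add: run_circuit_def)

lemma run_circuit_rev:
  "\<forall>g\<in>set c. snd g \<notin> fst g \<Longrightarrow> run_circuit (rev c) (run_circuit c x) = x"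
  unfolding run_circuit_def
  by (induction c arbitrary: x) (auto simp: apply_gate_apply_gate)

definition realizable :: "nat \<Rightarrow> (bool list \<Rightarrow> bool list) \<Rightarrow> bool" where
  "realizable m g \<longleftrightarrow>
     (\<exists>c. (\<forall>x\<in>set c. gate_ok_012 m x) \<and> (\<forall>x\<in>Zvec m. run_circuit c x = g x))"

lemma realizable_id: "realizable m id"
  unfolding realizable_def by (rule exI[of _ "[]"]) (simp add: run_circuit_def)

lemma realizable_gate: "gate_ok_012 m g \<Longrightarrow> realizable m (apply_gate g)"
  unfolding realizable_def by (rule exI[of _ "[g]"]) (simp add: run_circuit_def)

lemma realizable_cong:
  "realizable m g \<Longrightarrow> (\<And>x. x \<in> Zvec m \<Longrightarrow> g x = g' x) \<Longrightarrow> realizable m g'"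
  unfolding realizable_def by auto

lemma realizable_comp:
  assumes "realizable m g1" "realizable m g2"
  shows "realizable m (g2 \<circ> g1)"
proof -
  obtain c1 c2 where c1: "\<forall>x\<in>set c1. gate_ok_012 m x" "\<forall>x\<in>Zvec m. run_circuit c1 x = g1 x"
    and c2: "\<forall>x\<in>set c2. gate_ok_012 m x" "\<forall>x\<in>Zvec m. run_circuit c2 x = g2 x"
    using assms unfolding realizable_def by blast
  have "run_circuit (c1 @ c2) x = g2 (g1 x)" if "x \<in> Zvec m" for x
  proof -
    have "run_circuit c1 x \<in> Zvec m" using that by (simp add: Zvec_def)
    then show ?thesis using c1(2) c2(2) that by (simp add: run_circuit_append)
  qed
  then show ?thesis
    unfolding realizable_def using c1(1) c2(1) by (intro exI[of _ "c1 @ c2"]) auto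
qed

lemma realizable_inverse:
  assumes "realizable m g" and "\<And>x. x \<in> Zvec m \<Longrightarrow> h x \<in> Zvec m \<and> g (h x) = x"
  shows "realizable m h"
proof -
  obtain c where c: "\<forall>x\<in>set c. gate_ok_012 m x" "\<forall>x\<in>Zvec m. run_circuit c x = g x"
    using assms(1) unfolding realizable_def by blast
  have "\<forall>g\<in>set c. snd g \<notin> fst g" using c(1) by (auto simp: gate_ok_012_def gate_ok_def)
  then have "run_circuit (rev c) x = h x" if "x \<in> Zvec m" for x
    using run_circuit_rev[of c "h x"] c(2) assms(2)[OF that] by simp
  then show ?thesis
    unfolding realizable_def using c(1) by (intro exI[of _ "rev c"]) auto
qed

lemma realizable_conj:
  assumes "realizable m g" "\<And>x. x \<in> Zvec m \<Longrightarrow> g x \<in> Zvec m \<and> g (g x) = x"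
    and "realizable m p"
  shows "realizable m (g \<circ> p \<circ> g)"
  using realizable_comp[OF assms(1) realizable_comp[OF assms(3) assms(1)]]
  by (simp add: comp_assoc)

lemma realizable_flip_bit: "k < m \<Longrightarrow> realizable m (flip_bit k)"
  using realizable_gate[of m "({}, k)"]
  by (simp add: gate_ok_012_def gate_ok_def apply_gate_eq_flip_bit[abs_def])

lemma realizable_conj_transposes:
  assumes "realizable m g" and g: "\<And>x. x \<in> Zvec m \<Longrightarrow> g x \<in> Zvec m \<and> g (g x) = x"
    and abcd: "a \<in> Zvec m" "b \<in> Zvec m" "c \<in> Zvec m" "d \<in> Zvec m"
    and "realizable m (transpose a b \<circ> transpose c d)"
  shows "realizable m (transpose (g a) (g b) \<circ> transpose (g c) (g d))"
  using realizable_conj[OF assms(1) g assms(7)]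
proof (rule realizable_cong)
  fix x assume x: "x \<in> Zvec m"
  have inj: "inj_on g (Zvec m)" by (metis g inj_on_inverseI)
  have "g (transpose a b (transpose c d (g x))) = transpose (g a) (g b) (g (transpose c d (g x)))"
    using abcd x g by (intro transpose_apply_inj_on[OF inj]) (simp_all add: transpose_in_Zvec)
  also have "g (transpose c d (g x)) = transpose (g c) (g d) x"
    using transpose_apply_inj_on[OF inj abcd(3,4), of "g x"] x g by simp
  finally show "(g \<circ> (transpose a b \<circ> transpose c d) \<circ> g) x
                = (transpose (g a) (g b) \<circ> transpose (g c) (g d)) x"
    by simp
qed

lemma realizable_transpose_comp_commute:
  assumes "a \<in> Zvec m" "b \<in> Zvec m" "c \<in> Zvec m" "d \<in> Zvec m"
    and "realizable m (transpose a b \<circ> transpose c d)"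
  shows "realizable m (transpose c d \<circ> transpose a b)"
  by (rule realizable_inverse[OF assms(5)]) (use assms(1-4) in \<open>simp add: transpose_in_Zvec\<close>)

lemma realizable_comp_cancel_transpose:
  assumes "realizable m (p \<circ> transpose a b)" "realizable m (transpose a b \<circ> r)"
  shows "realizable m (p \<circ> r)"
proof -
  have "(p \<circ> transpose a b) \<circ> (transpose a b \<circ> r) = p \<circ> r"
    by (simp add: fun_eq_iff)
  then show ?thesis using realizable_comp[OF assms(2,1)] by simp
qed

section \<open>Gates with many controls\<close>

text \<open>Line b is toggled between the two gates controlled by b and S2 exactly when S1 holds, so t is
  flipped iff S1 and S2 hold; the second S1-gate restores b, whatever its initial value.\<close>

lemma apply_gate_Un_borrowed_line:
  assumes "S1 \<inter> S2 = {}" "b \<notin> S1" "b \<notin> S2" "t \<notin> S1" "t \<notin> S2" "b \<noteq> t"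
    "t < length x" "b < length x"
  shows "apply_gate (S1 \<union> S2, t) x =
    apply_gate (S1, b)
      (apply_gate (insert b S2, t) (apply_gate (S1, b) (apply_gate (insert b S2, t) x)))"
proof -
  have bit_b: "flip_bit b y ! b = (\<not> y ! b)" if "length y = length x" for y
    using assms that by (simp add: nth_flip_bit)
  show ?thesis
    using assms(1-6)
    by (cases "\<forall>i\<in>S1. x ! i"; cases "\<forall>i\<in>S2. x ! i"; cases "x ! b")
       (auto simp: apply_gate_eq_flip_bit all_nth_flip_bit_other ex_nth_flip_bit_other bit_b
         flip_bit_commute)
qed

lemma realizable_apply_gate_Un:
  assumes "S1 \<inter> S2 = {}" "b \<notin> S1" "b \<notin> S2" "t \<notin> S1" "t \<notin> S2" "b \<noteq> t" "t < m" "b < m"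
    and "realizable m (apply_gate (S1, b))" "realizable m (apply_gate (insert b S2, t))"
  shows "realizable m (apply_gate (S1 \<union> S2, t))"
proof -
  have "realizable m (apply_gate (S1, b) \<circ> apply_gate (insert b S2, t)
                      \<circ> apply_gate (S1, b) \<circ> apply_gate (insert b S2, t))"
    using assms(9,10) by (intro realizable_comp)
  then show ?thesis
    by (rule realizable_cong)
       (use assms in \<open>auto simp: Zvec_def intro!: apply_gate_Un_borrowed_line[symmetric]\<close>)
qed

lemma realizable_mcnot_idle_lines:
  assumes "S \<subseteq> {..<m}" "t < m" "t \<notin> S" "F \<subseteq> {..<m}" "F \<inter> S = {}" "t \<notin> F"
    "card S \<le> card F + 2"
  shows "realizable m (apply_gate (S, t))"
  using assms
proof (induction "card S" arbitrary: S t F rule: less_induct)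
  case less
  have finS: "finite S" and finF: "finite F"
    using less.prems finite_subset by blast+
  show ?case
  proof (cases "card S \<le> 2")
    case True
    then show ?thesis using less.prems finS
      by (intro realizable_gate) (auto simp: gate_ok_012_def gate_ok_def)
  next
    case False
    then obtain s where s: "s \<in> S" by fastforce
    from False less.prems have "F \<noteq> {}" by auto
    then obtain b where b: "b \<in> F" by blast
    have A: "realizable m (apply_gate (S - {s}, b))"
      by (rule less.hyps[where F = "insert t (F - {b})"])
         (use less.prems s b finS finF False in \<open>auto simp: card_Diff_singleton card_insert_if\<close>)
    have B: "realizable m (apply_gate (insert b {s}, t))"
      using less.prems s b
      by (intro realizable_gate) (auto simp: gate_ok_012_def gate_ok_def card_insert_if)
    have "realizable m (apply_gate ((S - {s}) \<union> {s}, t))"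
      by (rule realizable_apply_gate_Un[OF _ _ _ _ _ _ _ _ A B]) (use less.prems s b in auto)
    then show ?thesis using s by (simp add: insert_absorb)
  qed
qed

lemma realizable_mcnot:
  assumes "S \<subseteq> {..<m}" "t < m" "t \<notin> S" "b < m" "b \<notin> S" "b \<noteq> t"
  shows "realizable m (apply_gate (S, t))"
proof -
  have fin: "finite S" using assms(1) finite_subset by blast
  obtain S1 where S1: "S1 \<subseteq> S" "card S1 = card S div 2"
    using obtain_subset_with_card_n[of "card S div 2" S] by auto
  define S2 where "S2 = S - S1"
  have fin12: "finite S1" "finite S2" using fin S1 S2_def finite_subset by auto
  have c2: "card S2 = card S - card S div 2"
    using S1 fin S2_def by (simp add: card_Diff_subset fin12)
  text \<open>Each half of the controls sees the other half as idle lines.\<close>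
  have A: "realizable m (apply_gate (S1, b))"
    by (rule realizable_mcnot_idle_lines[where F = "insert t S2"])
       (use assms S1 S2_def fin12 c2 in \<open>auto simp: card_insert_if\<close>)
  have B: "realizable m (apply_gate (insert b S2, t))"
    by (rule realizable_mcnot_idle_lines[where F = S1])
       (use assms S1 S2_def fin12 c2 in \<open>auto simp: card_insert_if\<close>)
  have "realizable m (apply_gate (S1 \<union> S2, t))"
    by (rule realizable_apply_gate_Un[OF _ _ _ _ _ _ _ _ A B]) (use assms S1 S2_def in auto)
  moreover have "S1 \<union> S2 = S" using S1 S2_def by auto
  ultimately show ?thesis by simp
qed

section \<open>Even permutations are realizable\<close>

definition cube_edge :: "bool list \<Rightarrow> nat \<Rightarrow> bool list \<Rightarrow> bool list" where
  "cube_edge a j = transpose a (flip_bit j a)"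

lemma cube_edge_flip_bit: "cube_edge (flip_bit j a) j = cube_edge a j"
  by (simp add: cube_edge_def transpose_commute)

lemma cube_edge_conj_flip_bit:
  "flip_bit k (cube_edge a j (flip_bit k x)) = cube_edge (flip_bit k a) j x"
  using transpose_apply_inj_on[OF inj_flip_bit, of a "flip_bit j a" "flip_bit k x" k]
  by (simp add: cube_edge_def flip_bit_commute)

lemma realizable_transpose_comp_commute_cube_edge:
  assumes "a \<in> Zvec m" "b \<in> Zvec m" "realizable m (cube_edge a i \<circ> cube_edge b j)"
  shows "realizable m (cube_edge b j \<circ> cube_edge a i)"
  using realizable_transpose_comp_commute[of a m "flip_bit i a" b "flip_bit j b"] assms
  by (simp add: cube_edge_def)

lemma all_but_one_true_iff:
  assumes "x \<in> Zvec m" "j < m"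
  shows "(\<forall>k\<in>{..<m} - {j}. x ! k) \<longleftrightarrow>
         x = replicate m True \<or> x = flip_bit j (replicate m True)"
proof
  assume all: "\<forall>k\<in>{..<m} - {j}. x ! k"
  show "x = replicate m True \<or> x = flip_bit j (replicate m True)"
  proof (cases "x ! j")
    case True
    then have "x = replicate m True"
      using all assms by (intro nth_equalityI) (auto simp: Zvec_def)
    then show ?thesis ..
  next
    case False
    then have "x = flip_bit j (replicate m True)"
      using all assms by (intro nth_equalityI) (auto simp: Zvec_def nth_flip_bit)
    then show ?thesis ..
  qed
qed (use assms in \<open>auto simp: nth_flip_bit split: if_splits\<close>)

lemma cube_edge_ones_eq_apply_gate:
  assumes "x \<in> Zvec m" "j < m"
  shows "cube_edge (replicate m True) j x = apply_gate ({..<m} - {j}, j) x"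
  using all_but_one_true_iff[OF assms] flip_bit_neq[of j "replicate m True"] assms(2)
  by (auto simp: cube_edge_def apply_gate_eq_flip_bit transpose_def)

lemma cube_edge_ones_comp_parallel:
  assumes "x \<in> Zvec m" "i \<noteq> j" "i < m" "j < m"
  shows "cube_edge (replicate m True) j (cube_edge (flip_bit i (replicate m True)) j x)
         = apply_gate ({..<m} - {i, j}, j) x"
proof -
  let ?G = "apply_gate ({..<m} - {j}, j)" and ?P = "\<lambda>y. \<forall>k\<in>{..<m} - {i, j}. y ! k"
  have G: "?G y = (if ?P y \<and> y ! i then flip_bit j y else y)" for y
  proof -
    have "(\<forall>k\<in>{..<m} - {j}. y ! k) \<longleftrightarrow> ?P y \<and> y ! i" using assms by auto
    then show ?thesis by (simp add: apply_gate_eq_flip_bit)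
  qed
  have P_flip: "?P (flip_bit l y) = ?P y" if "l = i \<or> l = j" for l y
    by (intro ball_cong refl) (use that in auto)
  have li: "i < length x" using assms by (simp add: Zvec_def)
  have "cube_edge (replicate m True) j (cube_edge (flip_bit i (replicate m True)) j x)
        = ?G (flip_bit i (?G (flip_bit i x)))"
    using assms by (simp flip: cube_edge_conj_flip_bit add: cube_edge_ones_eq_apply_gate)
  also have "\<dots> = (if ?P x then flip_bit j x else x)"
    using assms(2) li
    by (cases "?P x"; cases "x ! i") (auto simp: G P_flip nth_flip_bit flip_bit_commute)
  also have "\<dots> = apply_gate ({..<m} - {i, j}, j) x"
    by (simp add: apply_gate_eq_flip_bit)
  finally show ?thesis .
qed

lemma realizable_cube_edge_comp_parallel:
  assumes "a \<in> Zvec m" "i \<noteq> j" "i < m" "j < m"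
  shows "realizable m (cube_edge a j \<circ> cube_edge (flip_bit i a) j)"
  using assms(1) ones_in_Zvec
proof (induction a rule: Zvec_flip_bit_induct)
  case base
  have "realizable m (apply_gate ({..<m} - {i, j}, j))"
    by (rule realizable_mcnot[where b = i]) (use assms in auto)
  then show ?case
    by (rule realizable_cong) (simp add: cube_edge_ones_comp_parallel assms)
next
  case (flip a k)
  have "realizable m
          (transpose a (flip_bit j a) \<circ> transpose (flip_bit i a) (flip_bit j (flip_bit i a)))"
    using flip(3) by (simp only: cube_edge_def)
  then have "realizable m (transpose (flip_bit k a) (flip_bit k (flip_bit j a))
          \<circ> transpose (flip_bit k (flip_bit i a)) (flip_bit k (flip_bit j (flip_bit i a))))"
    using flip(1) by (intro realizable_conj_transposes[OF realizable_flip_bit[OF flip(2)]]) simp_all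
  then show ?case by (simp add: cube_edge_def flip_bit_commute comp_def)
qed

lemma realizable_cube_edge_comp_same_dir:
  assumes "a \<in> Zvec m" "b \<in> Zvec m" "j < m"
  shows "realizable m (cube_edge a j \<circ> cube_edge b j)"
  using assms(1,2)
proof (induction a rule: Zvec_flip_bit_induct)
  case base
  have "cube_edge b j \<circ> cube_edge b j = id" by (simp add: cube_edge_def)
  then show ?case using realizable_id by metis
next
  case (flip a k)
  show ?case
  proof (cases "k = j")
    case True
    then show ?thesis using flip(3) by (simp add: cube_edge_flip_bit)
  next
    case False
    have "realizable m (cube_edge (flip_bit k a) j \<circ> cube_edge a j)"
      by (rule realizable_transpose_comp_commute_cube_edge[OF flip(1) _
            realizable_cube_edge_comp_parallel[OF flip(1) False flip(2) assms(3)]])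
         (use flip(1) in simp)
    from this flip(3) show ?thesis
      unfolding cube_edge_def[of a] by (rule realizable_comp_cancel_transpose)
  qed
qed

definition fredkin :: "nat \<Rightarrow> nat \<Rightarrow> nat \<Rightarrow> bool list \<Rightarrow> bool list" where
  "fredkin c i j x = (if x ! c then x[i := x ! j, j := x ! i] else x)"

lemma length_fredkin [simp]: "length (fredkin c i j x) = length x"
  by (simp add: fredkin_def)

lemma fredkin_fredkin:
  assumes "c \<noteq> i" "c \<noteq> j" "i < length x" "j < length x"
  shows "fredkin c i j (fredkin c i j x) = x"
proof -
  define y where "y = x[i := x ! j, j := x ! i]"
  have "y[i := y ! j, j := y ! i] = x"
    using assms unfolding y_def by (intro nth_equalityI) (auto simp: nth_list_update)
  then show ?thesis using assms unfolding fredkin_def y_def by (auto simp: nth_list_update)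
qed

lemma realizable_fredkin:
  assumes "c \<noteq> i" "c \<noteq> j" "i \<noteq> j" "c < m" "i < m" "j < m"
  shows "realizable m (fredkin c i j)"
proof -
  have "run_circuit [({j}, i), ({c, i}, j), ({j}, i)] x = fredkin c i j x" if "x \<in> Zvec m" for x
    using assms that unfolding run_circuit_def fredkin_def Zvec_def
    by (intro nth_equalityI) (auto simp: nth_apply_gate nth_list_update)
  then show ?thesis
    unfolding realizable_def using assms
    by (intro exI[of _ "[({j}, i), ({c, i}, j), ({j}, i)]"])
       (auto simp: gate_ok_012_def gate_ok_def)
qed

text \<open>The Fredkin gate controlled by line c swaps lines i and j at the unit vector e_c but fixes all
  points whose c-th bit is 0, so conjugating by it turns one of two parallel edges.\<close>

lemma realizable_cube_edge_comp_turn: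
  assumes "c \<noteq> i" "c \<noteq> j" "i \<noteq> j" "c < m" "i < m" "j < m"
  defines "e \<equiv> (replicate m False)[c := True]"
  shows "realizable m (cube_edge e j \<circ> cube_edge (flip_bit c e) i)"
proof -
  let ?F = "fredkin c i j"
  have e: "e \<in> Zvec m" and nth_e: "\<And>k. k < m \<Longrightarrow> e ! k = (k = c)"
    using assms by (simp_all add: e_def Zvec_def nth_list_update)
  have le: "length e = m" using e by (simp add: Zvec_def)
  have "?F e = e" "?F (flip_bit i e) = flip_bit j e"
    "?F (flip_bit c e) = flip_bit c e" "?F (flip_bit i (flip_bit c e)) = flip_bit i (flip_bit c e)"
    using assms(1-6) le nth_e unfolding fredkin_def
    by (auto intro!: nth_equalityI simp: nth_list_update nth_flip_bit split: if_splits)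
  moreover have "realizable m (transpose (?F e) (?F (flip_bit i e))
                   \<circ> transpose (?F (flip_bit c e)) (?F (flip_bit i (flip_bit c e))))"
    using realizable_cube_edge_comp_parallel[OF e assms(1,4,5)] e assms(1-6)
    by (intro realizable_conj_transposes[OF realizable_fredkin[OF assms(1-6)]])
      (simp_all add: cube_edge_def fredkin_fredkin Zvec_def)
  ultimately show ?thesis by (simp add: cube_edge_def)
qed

lemma realizable_cube_edge:
  assumes "m \<le> 3" "a \<in> Zvec m" "j < m"
  shows "realizable m (cube_edge a j)"
  using assms(2) ones_in_Zvec
proof (induction a rule: Zvec_flip_bit_induct)
  case base
  have "realizable m (apply_gate ({..<m} - {j}, j))"
    using assms by (intro realizable_gate) (auto simp: gate_ok_012_def gate_ok_def)
  then show ?case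
    by (rule realizable_cong) (simp add: cube_edge_ones_eq_apply_gate assms(3))
next
  case (flip a k)
  have "realizable m (flip_bit k \<circ> cube_edge a j \<circ> flip_bit k)"
    using flip by (intro realizable_conj realizable_flip_bit) simp_all
  then show ?case by (simp add: comp_def cube_edge_conj_flip_bit)
qed

lemma realizable_cube_edge_comp_cube_edge:
  assumes "a \<in> Zvec m" "b \<in> Zvec m" "i < m" "j < m"
  shows "realizable m (cube_edge a i \<circ> cube_edge b j)"
proof (cases "i = j \<or> m \<le> 3")
  case True
  then show ?thesis
  proof
    assume "i = j"
    then show ?thesis using realizable_cube_edge_comp_same_dir assms by simp
  next
    assume "m \<le> 3"
    then show ?thesis using assms realizable_comp realizable_cube_edge by blast
  qed
next
  case False
  have "card {i, j} < card {..<m}"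
    using False card_insert_le[of "{j}" i] by simp
  then have "\<not> {..<m} \<subseteq> {i, j}"
    by (meson card_mono finite.emptyI finite.insertI not_le)
  then obtain c where c: "c < m" "c \<noteq> i" "c \<noteq> j" by blast
  define e where "e = (replicate m False)[c := True]"
  have e: "e \<in> Zvec m" "flip_bit c e \<in> Zvec m" by (simp_all add: e_def Zvec_def)
  have "realizable m (cube_edge a i \<circ> cube_edge (flip_bit c e) i)"
    using realizable_cube_edge_comp_same_dir e assms by simp
  moreover have "realizable m (cube_edge (flip_bit c e) i \<circ> cube_edge e j)"
    using realizable_cube_edge_comp_turn[of c i j m] c False assms e
    by (intro realizable_transpose_comp_commute_cube_edge[OF e(1,2)]) (simp add: e_def)
  moreover have "realizable m (cube_edge e j \<circ> cube_edge b j)"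
    using realizable_cube_edge_comp_same_dir e assms by simp
  ultimately show ?thesis
    unfolding cube_edge_def[of e] cube_edge_def[of "flip_bit c e"]
    by (meson realizable_comp_cancel_transpose)
qed

lemma cube_edge_conj_transpose:
  assumes "a \<noteq> b" "flip_bit l a \<noteq> b"
  shows "cube_edge a l \<circ> transpose a b \<circ> cube_edge a l = transpose (flip_bit l a) b"
  unfolding cube_edge_def transpose_commute[of a "flip_bit l a"]
  by (rule transpose_comp_triple) (use assms in auto)

lemma realizable_cube_edge_comp_transpose:
  assumes "a \<in> Zvec m" "b \<in> Zvec m" "a \<noteq> b" "c \<in> Zvec m" "k < m"
  shows "realizable m (cube_edge c k \<circ> transpose a b)"
proof -
  have "\<forall>c\<in>Zvec m. \<forall>k<m. a \<noteq> b \<longrightarrow> realizable m (cube_edge c k \<circ> transpose a b)"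
    using assms(1,2)
  proof (induction a rule: Zvec_flip_bit_induct)
    case (flip a l)
    show ?case
    proof (intro ballI allI impI)
      fix c k assume c: "c \<in> Zvec m" and k: "k < m" and ne: "flip_bit l a \<noteq> b"
      show "realizable m (cube_edge c k \<circ> transpose (flip_bit l a) b)"
      proof (cases "a = b")
        case True
        then show ?thesis
          using realizable_cube_edge_comp_cube_edge[OF c flip(1) k flip(2)]
          by (simp add: cube_edge_def transpose_commute)
      next
        case False
        let ?E = "cube_edge a l"
        have "realizable m (cube_edge c k \<circ> ?E)"
          using realizable_cube_edge_comp_cube_edge c flip(1,2) k by blast
        moreover have "realizable m (transpose a b \<circ> ?E)"
        proof -
          have "realizable m (?E \<circ> transpose a b)" using flip False by blast
          then show ?thesis
            unfolding cube_edge_def using flip(1) assms(2)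
            by (intro realizable_transpose_comp_commute[of a m "flip_bit l a" a b]) simp_all
        qed
        ultimately have "realizable m ((cube_edge c k \<circ> ?E) \<circ> (transpose a b \<circ> ?E))"
          by (rule realizable_comp[rotated])
        then show ?thesis using cube_edge_conj_transpose[OF False ne] by (simp add: comp_assoc)
      qed
    qed
  qed simp
  then show ?thesis using assms by blast
qed

lemma realizable_transpose_comp_cube_edge:
  assumes "a \<in> Zvec m" "b \<in> Zvec m" "a \<noteq> b" "c \<in> Zvec m" "k < m"
  shows "realizable m (transpose a b \<circ> cube_edge c k)"
  using realizable_cube_edge_comp_transpose[OF assms] assms(1,2,4)
  unfolding cube_edge_def by (intro realizable_transpose_comp_commute[of c m]) simp_all

lemma realizable_evenperm:
  assumes "0 < m" "p permutes Zvec m" "evenperm p"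
  shows "realizable m p"
proof -
  define e where "e = cube_edge (replicate m True) 0"
  have e_transpose: "realizable m (e \<circ> transpose a b)" "realizable m (transpose a b \<circ> e)"
    if "a \<in> Zvec m" "b \<in> Zvec m" "a \<noteq> b" for a b
    using realizable_cube_edge_comp_transpose realizable_transpose_comp_cube_edge
      that ones_in_Zvec assms(1) unfolding e_def by blast+
  have "(evenperm p \<longrightarrow> realizable m p) \<and> (\<not> evenperm p \<longrightarrow> realizable m (e \<circ> p))"
    using assms(2) finite_Zvec
  proof (induction rule: permutes_induct)
    case id
    then show ?case using realizable_id by (simp add: id_def)
  next
    case (swap a b p)
    have parity: "evenperm (transpose a b \<circ> p) \<longleftrightarrow> \<not> evenperm p"
      using permutes_imp_permutation[OF finite_Zvec swap.hyps(4)] swap.hyps(3)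
      by (rule evenperm_transpose_comp)
    show ?case
    proof (intro conjI impI)
      assume "\<not> evenperm (transpose a b \<circ> p)"
      then have "realizable m p" using parity swap.IH by (auto simp: comp_def)
      then have "realizable m ((e \<circ> transpose a b) \<circ> p)"
        using e_transpose(1)[OF swap.hyps(1-3)] by (rule realizable_comp)
      then show "realizable m (e \<circ> (transpose a b \<circ> p))" by (simp add: comp_assoc)
    next
      assume "evenperm (transpose a b \<circ> p)"
      then have "realizable m (e \<circ> p)" using parity swap.IH by (auto simp: comp_def)
      then have "realizable m ((transpose a b \<circ> e) \<circ> (e \<circ> p))"
        using e_transpose(2)[OF swap.hyps(1-3)] by (rule realizable_comp)
      moreover have "(transpose a b \<circ> e) \<circ> (e \<circ> p) = transpose a b \<circ> (e \<circ> e) \<circ> p"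
        by (simp only: comp_assoc)
      moreover have "e \<circ> e = id" by (simp add: e_def cube_edge_def)
      ultimately show "realizable m (transpose a b \<circ> p)" by simp
    qed
  qed
  then show ?thesis using assms(3) by blast
qed

section \<open>Lifting f to an even permutation\<close>

lemma exists_fibre_labels:
  fixes f :: "bool list \<Rightarrow> bool list"
  assumes f: "\<forall>x\<in>Zvec n. f x \<in> Zvec n"
    and fibres: "\<forall>y\<in>Zvec n. card {x\<in>Zvec n. f x = y} \<le> 2 ^ q"
  shows "\<exists>\<iota>. \<forall>y. \<iota> y ` {x\<in>Zvec n. f x = y} \<subseteq> Zvec q \<and> inj_on (\<iota> y) {x\<in>Zvec n. f x = y}
              \<and> (x0 \<in> {x\<in>Zvec n. f x = y} \<longrightarrow> \<iota> y x0 = replicate q False)"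
proof (rule choice, rule allI)
  fix y
  let ?fibre = "{x\<in>Zvec n. f x = y}"
  have c: "card ?fibre \<le> card (Zvec q)"
  proof (cases "y \<in> Zvec n")
    case False
    then have "?fibre = {}" using f by auto
    then show ?thesis by (metis card.empty zero_le)
  qed (use fibres in \<open>simp add: card_Zvec\<close>)
  show "\<exists>\<iota>. \<iota> ` ?fibre \<subseteq> Zvec q \<and> inj_on \<iota> ?fibre \<and> (x0 \<in> ?fibre \<longrightarrow> \<iota> x0 = replicate q False)"
    by (rule card_le_inj_with_value[OF _ finite_Zvec c])
       (simp_all add: finite_Zvec, simp add: Zvec_def)
qed

lemma exists_injective_lift:
  fixes f :: "bool list \<Rightarrow> bool list"
  assumes f: "\<forall>x\<in>Zvec n. f x \<in> Zvec n"
    and fibres: "\<forall>y\<in>Zvec n. card {x\<in>Zvec n. f x = y} \<le> 2 ^ q"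
    and "x0 \<in> Zvec n"
  shows "\<exists>g. inj_on g (Zvec n) \<and> (\<forall>x\<in>Zvec n. g x \<in> Zvec (n + q) \<and> take n (g x) = f x)
             \<and> g x0 = f x0 @ replicate q False"
proof -
  let ?fibre = "\<lambda>y. {x\<in>Zvec n. f x = y}"
  obtain \<iota> where \<iota>: "\<forall>y. \<iota> y ` ?fibre y \<subseteq> Zvec q \<and> inj_on (\<iota> y) (?fibre y)
            \<and> (x0 \<in> ?fibre y \<longrightarrow> \<iota> y x0 = replicate q False)"
    using exists_fibre_labels[OF f fibres] by blast
  define g where "g x = f x @ \<iota> (f x) x" for x
  have g: "g x \<in> Zvec (n + q)" "take n (g x) = f x" "drop n (g x) = \<iota> (f x) x"
    if "x \<in> Zvec n" for x
  proof -
    have "\<iota> (f x) x \<in> Zvec q" using \<iota> that by blast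
    then show "g x \<in> Zvec (n + q)" "take n (g x) = f x" "drop n (g x) = \<iota> (f x) x"
      using f that by (simp_all add: g_def Zvec_def)
  qed
  have "inj_on g (Zvec n)"
  proof (rule inj_onI)
    fix x x' assume x: "x \<in> Zvec n" "x' \<in> Zvec n" and "g x = g x'"
    then have same: "f x = f x'" "\<iota> (f x) x = \<iota> (f x) x'"
      using g(2,3)[OF x(1)] g(2,3)[OF x(2)] by metis+
    have "inj_on (\<iota> (f x)) (?fibre (f x))" using \<iota> by blast
    from this same(2) show "x = x'" by (rule inj_onD) (use x same(1) in auto)
  qed
  moreover have "g x0 = f x0 @ replicate q False" using \<iota> assms(3) by (simp add: g_def)
  ultimately show ?thesis using g(1,2) by blast
qed

lemma exists_permutes_lifting:
  fixes f :: "bool list \<Rightarrow> bool list"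
  assumes f: "\<forall>x\<in>Zvec n. f x \<in> Zvec n"
    and fibres: "\<forall>y\<in>Zvec n. card {x\<in>Zvec n. f x = y} \<le> 2 ^ q"
    and x0: "x0 \<in> Zvec n"
  defines "z \<equiv> replicate q False"
  shows "\<exists>h U. h permutes Zvec (n + q) \<and> {x. h x \<noteq> x} \<subseteq> U \<and> f x0 @ z \<in> U
                \<and> finite U \<and> card U < 2 ^ (n + 1) \<and> (\<forall>x\<in>Zvec n. take n (h (x @ z)) = f x)"
proof -
  obtain g where g_inj: "inj_on g (Zvec n)"
    and g: "\<forall>x\<in>Zvec n. g x \<in> Zvec (n + q) \<and> take n (g x) = f x"
    and g_x0: "g x0 = f x0 @ z"
    using exists_injective_lift[OF f fibres x0] unfolding z_def by blast
  define A where "A = (\<lambda>x. x @ z) ` Zvec n"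
  define \<sigma> where "\<sigma> = g \<circ> take n"
  have "take n ` A = id ` Zvec n"
    unfolding A_def image_image by (rule image_cong) (simp_all add: Zvec_def)
  then have take_A: "take n ` A = Zvec n" by simp
  have inj_take: "inj_on (take n) A" by (auto simp: A_def inj_on_def Zvec_def)
  have \<sigma>_inj: "inj_on \<sigma> A"
    unfolding \<sigma>_def using inj_take g_inj take_A by (simp add: comp_inj_on)
  have \<sigma>_A: "\<sigma> ` A = g ` Zvec n"
    by (metis \<sigma>_def image_comp take_A)
  have finA: "finite A" by (simp add: A_def finite_Zvec)
  have "A \<subseteq> Zvec (n + q)" by (auto simp: A_def z_def Zvec_def)
  moreover have "\<sigma> ` A \<subseteq> Zvec (n + q)" unfolding \<sigma>_A using g by blast
  ultimately obtain h where h: "h permutes Zvec (n + q)" "{x. h x \<noteq> x} \<subseteq> A \<union> \<sigma> ` A"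
      "\<forall>a\<in>A. h a = \<sigma> a"
    using permutes_extension[OF finA \<sigma>_inj] by blast
  moreover have u: "f x0 @ z \<in> A \<inter> \<sigma> ` A"
  proof
    show "f x0 @ z \<in> A" using f x0 by (simp add: A_def)
    show "f x0 @ z \<in> \<sigma> ` A" unfolding \<sigma>_A using x0 g_x0 by (metis image_eqI)
  qed
  moreover have "finite (A \<union> \<sigma> ` A)" using finA by simp
  moreover have "card (A \<union> \<sigma> ` A) < 2 ^ (n + 1)"
  proof -
    have "card A = 2 ^ n" by (simp add: A_def card_image inj_on_def card_Zvec)
    then show ?thesis using card_Un_image_less[OF finA \<sigma>_inj] u by auto
  qed
  moreover have "take n (h (x @ z)) = f x" if "x \<in> Zvec n" for x
    using h(3) g that by (auto simp: A_def \<sigma>_def Zvec_def)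
  ultimately show ?thesis by blast
qed

lemma exists_evenperm_lifting:
  fixes f :: "bool list \<Rightarrow> bool list"
  assumes "0 < q"
    and f: "\<forall>x\<in>Zvec n. f x \<in> Zvec n"
    and fibres: "\<forall>y\<in>Zvec n. card {x\<in>Zvec n. f x = y} \<le> 2 ^ q"
  shows "\<exists>h. h permutes Zvec (n + q) \<and> evenperm h \<and>
            card {x\<in>Zvec (n + q). h x \<noteq> x} \<le> 2 ^ (n + 1) \<and>
            (\<forall>x\<in>Zvec n. psi (n + q) n (h (phi n (n + q) x)) = f x)"
proof -
  define z where "z = replicate q False"
  define x0 where "x0 = replicate n False"
  have "x0 \<in> Zvec n" by (simp add: x0_def Zvec_def)
  then obtain h U where h: "h permutes Zvec (n + q)" "{x. h x \<noteq> x} \<subseteq> U" "f x0 @ z \<in> U"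
      "finite U" "card U < 2 ^ (n + 1)" "\<forall>x\<in>Zvec n. take n (h (x @ z)) = f x"
    using exists_permutes_lifting[OF f fibres] unfolding z_def by blast
  text \<open>If h is odd, compose it with a transposition of two points that agree on the first n lines.\<close>
  define u v where "u = f x0 @ z" and "v = f x0 @ True # replicate (q - 1) False"
  define h' where "h' = (if evenperm h then h else transpose u v \<circ> h)"
  have uv: "u \<noteq> v" "u \<in> Zvec (n + q)" "v \<in> Zvec (n + q)" "take n u = take n v"
    using assms(1) f \<open>x0 \<in> Zvec n\<close> by (cases q; auto simp: u_def v_def z_def Zvec_def)+
  have "h' permutes Zvec (n + q)"
    using h(1) uv by (simp add: h'_def permutes_compose permutes_swap_id)
  moreover have "evenperm h'"
    using permutes_imp_permutation[OF finite_Zvec h(1)] uv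
    by (simp add: h'_def evenperm_transpose_comp)
  moreover have "card {x\<in>Zvec (n + q). h' x \<noteq> x} \<le> 2 ^ (n + 1)"
  proof -
    have "{x. h' x \<noteq> x} \<subseteq> {x. h x \<noteq> x} \<union> {u, v}"
      using support_transpose_comp[of u v h] by (auto simp: h'_def)
    then have "{x\<in>Zvec (n + q). h' x \<noteq> x} \<subseteq> insert v U"
      using h(2,3) by (auto simp: u_def)
    then have "card {x\<in>Zvec (n + q). h' x \<noteq> x} \<le> card (insert v U)"
      by (rule card_mono[rotated]) (simp add: h(4))
    also have "\<dots> \<le> card U + 1" using h(4) by (simp add: card_insert_if)
    finally show ?thesis using h(5) by linarith
  qed
  moreover have "take n (h' y) = take n (h y)" for y
    using uv(4) by (simp add: h'_def transpose_def)
  ultimately show ?thesis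
    using h(6) by (auto simp: psi_def phi_def z_def)
qed

lemma realizable_imp_Fset:
  assumes "realizable (n + q) h" "\<forall>x\<in>Zvec n. psi (n + q) n (h (phi n (n + q) x)) = f x"
  shows "f \<in> Fset n q"
proof -
  obtain c where "\<forall>g\<in>set c. gate_ok_012 (n + q) g" "\<forall>x\<in>Zvec (n + q). run_circuit c x = h x"
    using assms(1) unfolding realizable_def by blast
  moreover have "phi n (n + q) x \<in> Zvec (n + q)" if "x \<in> Zvec n" for x
    using that by (simp add: phi_def Zvec_def)
  ultimately show ?thesis
    using assms(2) unfolding Fset_def by auto
qed

theorem mainTheorem2:
  fixes n q :: nat and f :: "bool list \<Rightarrow> bool list"
  assumes "n \<ge> 1" and "0 < q" and "q \<le> n"
    and "\<forall>x\<in>Zvec n. f x \<in> Zvec n"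
    and "\<forall>y\<in>Zvec n. card {x\<in>Zvec n. f x = y} \<le> 2 ^ q"
  shows "(\<exists>h. h permutes Zvec (n + q) \<and> evenperm h \<and>
            card {x\<in>Zvec (n + q). h x \<noteq> x} \<le> 2 ^ (n + 1) \<and>
            (\<forall>x\<in>Zvec n. psi (n + q) n (h (phi n (n + q) x)) = f x))
         \<and> f \<in> Fset n q"
proof -
  obtain h where h: "h permutes Zvec (n + q)" "evenperm h"
      "card {x\<in>Zvec (n + q). h x \<noteq> x} \<le> 2 ^ (n + 1)"
      "\<forall>x\<in>Zvec n. psi (n + q) n (h (phi n (n + q) x)) = f x"
    using exists_evenperm_lifting[OF assms(2,4,5)] by blast
  moreover have "realizable (n + q) h"
    using realizable_evenperm[OF _ h(1,2)] assms(2) by simp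
  ultimately show ?thesis using realizable_imp_Fset by blast
qed

end
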